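(* Let $\mathcal X=\{X_1,\dots,X_n\}$, $n\in\mathbb N$, be a multi-set of real symmetric $2\times2$ matrices, let $\lambda_1$ be (one of) the largest eigenvalue(s) of all these matrices, attained by $X_1$ with normalised eigenvector $u_1$, and let $v_1\perp u_1$ be a normalised vector. Let $\mathcal V^{\lambda_1}_{\sup}(\mathcal X)$ be the set of unit vectors $v$ such that $Xv=\lambda_1v$ for some $X\in\mathcal X$. Then $$\mathrm{Sup}_{\mathrm{LE}}(\mathcal X)=\begin{cases}\lambda_1I,&\text{if }\lambda_1\text{ is not unique and there is }v\in\mathcal V^{\lambda_1}_{\sup}(\mathcal X)\text{ with }v\neq\pm u_1,\\ \lambda_1u_1u_1^{\mathsf T}+\mu_*v_1v_1^{\mathsf T},&\text{otherwise,}\end{cases}$$ where $\mu_*\le\lambda_1$ is the largest eigenvalue of $\mathcal X$ (other than the occurrence $\lambda_1$ of $X_1$) whose associated eigenvector is not aligned with $u_1$.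
   Context: $I$ is the $2\times2$ identity. Every real symmetric $2\times2$ matrix $X_i$ is written in spectral form $X_i=\lambda_i u_iu_i^{\mathsf T}+\mu_i v_iv_i^{\mathsf T}$ with $\lambda_i\ge\mu_i$ and orthonormal $u_i,v_i$. "The eigenvalues of $\mathcal X$" means the multi-set of all $2n$ numbers $\lambda_1,\mu_1,\dots,\lambda_n,\mu_n$, each with its associated eigenvector; an eigenvalue is unique if it occurs exactly once in this multi-set. Two unit vectors are aligned if they are equal up to sign. The log-exp-supremum is $\mathrm{Sup}_{\mathrm{LE}}(\mathcal X):=\lim_{m\to\infty}\frac1m\log\sum_{i=1}^n\exp(mX_i)$ (matrix exponential and logarithm). *)

theory Defs
  imports "HOL-Analysis.Analysis"
begin

type_synonym mat2 = "real^2^2"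

fun matpow :: "mat2 \<Rightarrow> nat \<Rightarrow> mat2" where
  "matpow A 0 = mat 1"
| "matpow A (Suc k) = A ** matpow A k"

definition mexp :: "mat2 \<Rightarrow> mat2" where
  "mexp A = (\<Sum>k. (1 / fact k) *\<^sub>R matpow A k)"

text \<open>Matrix logarithm: the (unique) real symmetric logarithm, used only for
  symmetric positive definite arguments.\<close>
definition mlog :: "mat2 \<Rightarrow> mat2" where
  "mlog M = (THE L. transpose L = L \<and> mexp L = M)"

definition outer :: "real^2 \<Rightarrow> real^2 \<Rightarrow> mat2" where
  "outer a b = (\<chi> r c. a $ r * b $ c)"

definition aligned :: "real^2 \<Rightarrow> real^2 \<Rightarrow> bool" where
  "aligned a b \<longleftrightarrow> a = b \<or> a = - b"

definition has_sup_LE :: "nat \<Rightarrow> (nat \<Rightarrow> mat2) \<Rightarrow> mat2 \<Rightarrow> bool" where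
  "has_sup_LE n X S \<longleftrightarrow>
     ((\<lambda>m::real. (1 / m) *\<^sub>R mlog (\<Sum>i\<in>{1..n}. mexp (m *\<^sub>R X i))) \<longlongrightarrow> S) at_top"

text \<open>Occurrences of eigenvalues: (i,0) is lambda_i with eigenvector u_i,
  (i,1) is mu_i with eigenvector v_i, for i in {1..n}.\<close>
definition occ :: "nat \<Rightarrow> (nat \<times> nat) set" where
  "occ n = {1..n} \<times> {0, 1}"

definition eigval :: "(nat \<Rightarrow> real) \<Rightarrow> (nat \<Rightarrow> real) \<Rightarrow> nat \<times> nat \<Rightarrow> real" where
  "eigval lam mu p = (if snd p = 0 then lam (fst p) else mu (fst p))"

definition eigvec :: "(nat \<Rightarrow> real^2) \<Rightarrow> (nat \<Rightarrow> real^2) \<Rightarrow> nat \<times> nat \<Rightarrow> real^2" where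
  "eigvec u v p = (if snd p = 0 then u (fst p) else v (fst p))"

end

theory Submission
  imports Defs "HOL-Real_Asymp.Real_Asymp"
begin

text \<open>
  Splitting every \<open>X\<^sub>i\<close> into its two eigenvalue occurrences, \<open>\<Sum>\<^sub>i exp (m X\<^sub>i)\<close> becomes the Gram sum
  \<open>G m = \<Sum>\<^sub>p exp (m e\<^sub>p) w\<^sub>p w\<^sub>p\<^sup>T\<close> over all occurrences \<open>p\<close> (eigenvalue \<open>e\<^sub>p\<close>, unit eigenvector
  \<open>w\<^sub>p\<close>). Write \<open>G m = \<sigma>\<^sub>1 a a\<^sup>T + \<sigma>\<^sub>2 b b\<^sup>T\<close> with \<open>\<sigma>\<^sub>1 \<ge> \<sigma>\<^sub>2\<close>. Rayleigh quotients give
  \<open>\<sigma>\<^sub>1 \<asymp> exp (m \<lambda>\<^sub>1)\<close>. In direction \<open>v\<^sub>1\<close> only occurrences transversal to \<open>u\<^sub>1\<close> contribute, so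
  \<open>\<sigma>\<^sub>2 \<lesssim> exp (m \<mu>\<^sub>*)\<close>; conversely the occurrence of \<open>u\<^sub>1\<close> together with a transversal occurrence
  of eigenvalue \<open>\<mu>\<^sub>*\<close> bounds the quadratic form from below in every direction, so
  \<open>\<sigma>\<^sub>2 \<gtrsim> exp (m \<mu>\<^sub>*)\<close>. Hence \<open>(1/m) log \<sigma>\<^sub>1 \<rightarrow> \<lambda>\<^sub>1\<close> and \<open>(1/m) log \<sigma>\<^sub>2 \<rightarrow> \<mu>\<^sub>*\<close>. If \<open>\<mu>\<^sub>* < \<lambda>\<^sub>1\<close>,
  the same estimate shows that \<open>a\<close> turns towards \<open>u\<^sub>1\<close> at rate \<open>exp (m (\<mu>\<^sub>* - \<lambda>\<^sub>1))\<close>; if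
  \<open>\<mu>\<^sub>* = \<lambda>\<^sub>1\<close> the eigenvectors do not matter. Either way
  \<open>(1/m) log G m \<rightarrow> \<lambda>\<^sub>1 u\<^sub>1 u\<^sub>1\<^sup>T + \<mu>\<^sub>* v\<^sub>1 v\<^sub>1\<^sup>T\<close>, and an eigenvector of some \<open>X\<^sub>i\<close> for \<open>\<lambda>\<^sub>1\<close> that
  is not aligned with \<open>u\<^sub>1\<close> yields a transversal occurrence of \<open>\<lambda>\<^sub>1\<close>, forcing \<open>\<mu>\<^sub>* = \<lambda>\<^sub>1\<close>.
\<close>

section \<open>Outer products and orthonormal pairs in the plane\<close>

lemma outer_nth [simp]: "outer a b $ i $ j = a $ i * b $ j"
  by (simp add: outer_def)

lemma outer_mult_vec: "outer a b *v x = (b \<bullet> x) *\<^sub>R a"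
  by (simp add: vec_eq_iff matrix_vector_mult_def inner_vec_def sum_2 algebra_simps)

lemma outer_mult_outer: "outer a b ** outer c d = (b \<bullet> c) *\<^sub>R outer a d"
  by (simp add: vec_eq_iff matrix_matrix_mult_def inner_vec_def sum_2 algebra_simps)

lemma matrix_mult_outer: "(A::mat2) ** outer x y = outer (A *v x) y"
  by (simp add: vec_eq_iff matrix_matrix_mult_def matrix_vector_mult_def sum_2 algebra_simps)

lemma transpose_outer: "transpose (outer a b) = outer b a"
  by (simp add: vec_eq_iff transpose_def)

lemma norm_outer: "norm (outer (a::real^2) b) = norm a * norm b"
proof -
  have row: "outer a b $ i = a $ i *\<^sub>R b" for i
    by (simp add: vec_eq_iff)
  have "norm (outer a b) = L2_set (\<lambda>i. \<bar>a $ i\<bar>) UNIV * norm b"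
    unfolding norm_vec_def[of "outer a b"] row by (simp add: L2_set_left_distrib)
  then show ?thesis
    by (simp add: norm_vec_def)
qed

definition orthonormal2 :: "real^2 \<Rightarrow> real^2 \<Rightarrow> bool" where
  "orthonormal2 a b \<longleftrightarrow> norm a = 1 \<and> norm b = 1 \<and> a \<bullet> b = 0"

lemma orthonormal2_inner:
  assumes "orthonormal2 a b"
  shows "a \<bullet> a = 1" "b \<bullet> b = 1" "a \<bullet> b = 0" "b \<bullet> a = 0"
  using assms by (simp_all add: orthonormal2_def norm_eq_1 inner_commute)

lemma orthonormal2_commute: "orthonormal2 a b \<Longrightarrow> orthonormal2 b a"
  by (simp add: orthonormal2_def inner_commute)

text \<open>Three pairwise orthogonal nonzero vectors would be independent in a space of dimension 2.\<close>
lemma orthonormal2_expand: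
  assumes ab: "orthonormal2 a b"
  shows "x = (a \<bullet> x) *\<^sub>R a + (b \<bullet> x) *\<^sub>R b"
proof (rule ccontr)
  define y where "y = x - (a \<bullet> x) *\<^sub>R a - (b \<bullet> x) *\<^sub>R b"
  assume "x \<noteq> (a \<bullet> x) *\<^sub>R a + (b \<bullet> x) *\<^sub>R b"
  then have "y \<noteq> 0"
    by (simp add: y_def diff_diff_eq)
  have "y \<bullet> a = 0" "y \<bullet> b = 0"
    using orthonormal2_inner[OF ab] by (simp_all add: y_def algebra_simps inner_commute)
  moreover have "a \<noteq> b" "a \<noteq> y" "b \<noteq> y" "a \<noteq> 0" "b \<noteq> 0"
    using calculation orthonormal2_inner[OF ab] by (auto simp: inner_commute)
  ultimately have "pairwise orthogonal {a, b, y}" "0 \<notin> {a, b, y}" "card {a, b, y} = 3"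
    using orthonormal2_inner[OF ab] \<open>y \<noteq> 0\<close>
    by (auto simp: pairwise_insert orthogonal_def inner_commute)
  then show False
    using independent_bound[OF pairwise_orthogonal_independent] by fastforce
qed

lemma orthonormal2_outer_sum:
  "orthonormal2 a b \<Longrightarrow> outer a a + outer b b = mat 1"
  by (metis matrix_eq matrix_vector_mult_add_rdistrib matrix_vector_mul_lid outer_mult_vec
      orthonormal2_expand)

lemma orthonormal2_sum_sq:
  assumes ab: "orthonormal2 a b"
  shows "(a \<bullet> x)\<^sup>2 + (b \<bullet> x)\<^sup>2 = x \<bullet> x"
proof -
  have "x \<bullet> x = ((a \<bullet> x) *\<^sub>R a + (b \<bullet> x) *\<^sub>R b) \<bullet> ((a \<bullet> x) *\<^sub>R a + (b \<bullet> x) *\<^sub>R b)"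
    using orthonormal2_expand[OF ab] by metis
  then show ?thesis
    using orthonormal2_inner[OF ab] by (simp add: inner_add_left inner_add_right power2_eq_square)
qed

section \<open>Symmetric 2x2 matrices: spectral theorem and functional calculus\<close>

lemma spectral_mult_vec:
  "(\<alpha> *\<^sub>R outer a a + \<beta> *\<^sub>R outer b b) *v x = (\<alpha> * (a \<bullet> x)) *\<^sub>R a + (\<beta> * (b \<bullet> x)) *\<^sub>R b"
  by (simp add: matrix_vector_mult_add_rdistrib outer_mult_vec flip: scaleR_matrix_vector_assoc)

lemma spectral_eigenvectors:
  assumes "orthonormal2 a b"
  shows "(\<alpha> *\<^sub>R outer a a + \<beta> *\<^sub>R outer b b) *v a = \<alpha> *\<^sub>R a"
    and "(\<alpha> *\<^sub>R outer a a + \<beta> *\<^sub>R outer b b) *v b = \<beta> *\<^sub>R b"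
  using orthonormal2_inner[OF assms] by (simp_all add: spectral_mult_vec)

lemma transpose_spectral:
  "transpose (\<alpha> *\<^sub>R outer a a + \<beta> *\<^sub>R outer b b) = \<alpha> *\<^sub>R outer a a + \<beta> *\<^sub>R outer b b"
  by (simp add: vec_eq_iff transpose_def mult.commute)

lemma symmetric_inner_commute:
  fixes M :: "real^'n^'n"
  assumes "transpose M = M"
  shows "(M *v x) \<bullet> y = x \<bullet> (M *v y)"
proof -
  have "M *v x = x v* M"
    using transpose_matrix_vector[of M x] assms by simp
  then show ?thesis
    by (simp add: dot_lmul_matrix)
qed

text \<open>The larger root of the characteristic polynomial makes \<open>M - \<alpha> I\<close> singular.\<close>
lemma symmetric2_eigenvector:
  assumes sym: "transpose M = (M::mat2)"
  obtains a \<alpha> where "norm a = 1" "M *v a = \<alpha> *\<^sub>R a"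
proof -
  define d where "d = (M$1$1 - M$2$2) / 2"
  define s where "s = sqrt (d\<^sup>2 + (M$1$2)\<^sup>2)"
  define \<alpha> where "\<alpha> = (M$1$1 + M$2$2) / 2 + s"
  have q: "M$2$1 = M$1$2"
    using arg_cong[OF sym, of "\<lambda>A. A $ 1 $ 2"] by (simp add: transpose_def)
  have p: "M$1$1 - \<alpha> = d - s" and r: "M$2$2 - \<alpha> = - d - s"
    by (simp_all add: \<alpha>_def d_def field_simps)
  have "det (M - \<alpha> *\<^sub>R mat 1) = (M$1$1 - \<alpha>) * (M$2$2 - \<alpha>) - M$1$2 * M$2$1"
    by (simp add: det_2 mat_def)
  also have "\<dots> = s\<^sup>2 - d\<^sup>2 - (M$1$2)\<^sup>2"
    unfolding p r q by (simp add: power2_eq_square algebra_simps)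
  also have "\<dots> = 0"
    by (simp add: s_def)
  finally have "\<exists>x. x \<noteq> 0 \<and> (M - \<alpha> *\<^sub>R mat 1) *v x = 0"
    by (simp add: det_eq_0_rank matrix_nonfull_linear_equations_eq)
  then obtain x where "x \<noteq> 0" "(M - \<alpha> *\<^sub>R mat 1) *v x = 0"
    by blast
  moreover have "(\<alpha> *\<^sub>R mat 1) *v x = \<alpha> *\<^sub>R x"
    by (metis scaleR_matrix_vector_assoc matrix_vector_mul_lid)
  ultimately have "norm (x /\<^sub>R norm x) = 1" "M *v (x /\<^sub>R norm x) = \<alpha> *\<^sub>R (x /\<^sub>R norm x)"
    by (simp_all add: matrix_vector_mult_diff_rdistrib matrix_vector_mult_scaleR)
  then show thesis
    by (rule that)
qed

lemma symmetric2_spectral_of_eigenvector: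
  assumes sym: "transpose M = (M::mat2)" and ab: "orthonormal2 a b" and Ma: "M *v a = \<alpha> *\<^sub>R a"
  shows "M = \<alpha> *\<^sub>R outer a a + (b \<bullet> (M *v b)) *\<^sub>R outer b b"
proof -
  have "a \<bullet> (M *v b) = 0"
    using orthonormal2_inner[OF ab] by (simp flip: symmetric_inner_commute[OF sym] add: Ma)
  then have Mb: "M *v b = (b \<bullet> (M *v b)) *\<^sub>R b"
    using orthonormal2_expand[OF ab, of "M *v b"] by simp
  have "M = M ** (outer a a + outer b b)"
    by (simp add: orthonormal2_outer_sum[OF ab])
  also have "\<dots> = outer (M *v a) a + outer (M *v b) b"
    by (simp add: matrix_add_ldistrib matrix_mult_outer)
  also have "\<dots> = \<alpha> *\<^sub>R outer a a + (b \<bullet> (M *v b)) *\<^sub>R outer b b"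
    by (subst Mb) (simp add: Ma vec_eq_iff)
  finally show ?thesis .
qed

lemma symmetric2_spectral:
  assumes sym: "transpose M = (M::mat2)"
  obtains a b \<alpha> \<beta> where "orthonormal2 a b" "\<beta> \<le> \<alpha>" "M = \<alpha> *\<^sub>R outer a a + \<beta> *\<^sub>R outer b b"
proof -
  obtain a \<alpha> where a: "norm a = 1" "M *v a = \<alpha> *\<^sub>R a"
    using symmetric2_eigenvector[OF sym] .
  define b where "b = (vector [- a$2, a$1] :: real^2)"
  have "orthonormal2 a b"
    using a(1) by (simp add: orthonormal2_def b_def norm_eq_1 inner_vec_def sum_2 algebra_simps)
  with symmetric2_spectral_of_eigenvector[OF sym _ a(2)] obtain \<beta>
    where ab: "orthonormal2 a b" "M = \<alpha> *\<^sub>R outer a a + \<beta> *\<^sub>R outer b b"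
    by blast
  show thesis
  proof (cases "\<beta> \<le> \<alpha>")
    case True
    then show thesis using that ab by blast
  next
    case False
    show thesis
    proof (rule that)
      show "orthonormal2 b a"
        using ab(1) by (rule orthonormal2_commute)
      show "\<alpha> \<le> \<beta>"
        using False by simp
      show "M = \<beta> *\<^sub>R outer b b + \<alpha> *\<^sub>R outer a a"
        using ab(2) by (simp add: add.commute)
    qed
  qed
qed

lemma matrix_add_rdistrib: "(A + B) ** C = A ** C + B ** (C::'a::semiring_1^'n^'m)"
  by (vector matrix_matrix_mult_def sum.distrib distrib_right)

lemma matpow_spectral:
  assumes ab: "orthonormal2 a b"
  shows "matpow (\<alpha> *\<^sub>R outer a a + \<beta> *\<^sub>R outer b b) k = \<alpha>^k *\<^sub>R outer a a + \<beta>^k *\<^sub>R outer b b"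
proof (induction k)
  case 0
  then show ?case
    using orthonormal2_outer_sum[OF ab] by simp
next
  case (Suc k)
  then show ?case
    using orthonormal2_inner[OF ab]
    by (simp add: matrix_add_ldistrib matrix_add_rdistrib matrix_scalar_ac outer_mult_outer
        mult.commute flip: scalar_matrix_assoc)
qed

lemma mexp_spectral:
  assumes ab: "orthonormal2 a b"
  shows "mexp (\<alpha> *\<^sub>R outer a a + \<beta> *\<^sub>R outer b b) = exp \<alpha> *\<^sub>R outer a a + exp \<beta> *\<^sub>R outer b b"
proof -
  have "(\<lambda>k. (1 / fact k) *\<^sub>R matpow (\<alpha> *\<^sub>R outer a a + \<beta> *\<^sub>R outer b b) k)
      = (\<lambda>k. (\<alpha>^k /\<^sub>R fact k) *\<^sub>R outer a a + (\<beta>^k /\<^sub>R fact k) *\<^sub>R outer b b)"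
    by (simp add: matpow_spectral[OF ab] scaleR_add_right divide_inverse_commute)
  also have "\<dots> sums (exp \<alpha> *\<^sub>R outer a a + exp \<beta> *\<^sub>R outer b b)"
    by (intro sums_add sums_scaleR_left exp_converges)
  finally show ?thesis
    unfolding mexp_def by (rule sums_unique[symmetric])
qed

lemma spectral_ln_eigenvector:
  assumes cd: "orthonormal2 c d"
    and x: "(exp \<gamma> *\<^sub>R outer c c + exp \<delta> *\<^sub>R outer d d) *v x = \<sigma> *\<^sub>R x"
  shows "(\<gamma> *\<^sub>R outer c c + \<delta> *\<^sub>R outer d d) *v x = ln \<sigma> *\<^sub>R x"
proof -
  have "exp \<gamma> * (c \<bullet> x) = \<sigma> * (c \<bullet> x)" "exp \<delta> * (d \<bullet> x) = \<sigma> * (d \<bullet> x)"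
    using arg_cong[OF x, of "inner c"] arg_cong[OF x, of "inner d"] orthonormal2_inner[OF cd]
    by (simp_all add: spectral_mult_vec inner_add_right)
  then have \<gamma>: "\<gamma> * (c \<bullet> x) = ln \<sigma> * (c \<bullet> x)" and \<delta>: "\<delta> * (d \<bullet> x) = ln \<sigma> * (d \<bullet> x)"
    by (metis ln_exp mult_cancel_right)+
  have "(\<gamma> *\<^sub>R outer c c + \<delta> *\<^sub>R outer d d) *v x = (ln \<sigma> * (c \<bullet> x)) *\<^sub>R c + (ln \<sigma> * (d \<bullet> x)) *\<^sub>R d"
    unfolding spectral_mult_vec \<gamma> \<delta> ..
  also have "\<dots> = ln \<sigma> *\<^sub>R ((c \<bullet> x) *\<^sub>R c + (d \<bullet> x) *\<^sub>R d)"
    by (simp add: scaleR_add_right)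
  also have "\<dots> = ln \<sigma> *\<^sub>R x"
    by (simp flip: orthonormal2_expand[OF cd])
  finally show ?thesis .
qed

lemma mlog_spectral:
  assumes ab: "orthonormal2 a b" and "\<sigma>1 > 0" "\<sigma>2 > 0"
  shows "mlog (\<sigma>1 *\<^sub>R outer a a + \<sigma>2 *\<^sub>R outer b b) = ln \<sigma>1 *\<^sub>R outer a a + ln \<sigma>2 *\<^sub>R outer b b"
  unfolding mlog_def
proof (rule the_equality)
  show "transpose (ln \<sigma>1 *\<^sub>R outer a a + ln \<sigma>2 *\<^sub>R outer b b) = ln \<sigma>1 *\<^sub>R outer a a + ln \<sigma>2 *\<^sub>R outer b b
      \<and> mexp (ln \<sigma>1 *\<^sub>R outer a a + ln \<sigma>2 *\<^sub>R outer b b) = \<sigma>1 *\<^sub>R outer a a + \<sigma>2 *\<^sub>R outer b b"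
    using assms by (simp add: mexp_spectral transpose_spectral)
next
  fix L
  assume L: "transpose L = L \<and> mexp L = \<sigma>1 *\<^sub>R outer a a + \<sigma>2 *\<^sub>R outer b b"
  then obtain c d \<gamma> \<delta> where cd: "orthonormal2 c d" and L_eq: "L = \<gamma> *\<^sub>R outer c c + \<delta> *\<^sub>R outer d d"
    by (metis symmetric2_spectral)
  have "exp \<gamma> *\<^sub>R outer c c + exp \<delta> *\<^sub>R outer d d = \<sigma>1 *\<^sub>R outer a a + \<sigma>2 *\<^sub>R outer b b"
    using L L_eq mexp_spectral[OF cd] by simp
  then have "L *v a = ln \<sigma>1 *\<^sub>R a" "L *v b = ln \<sigma>2 *\<^sub>R b"
    unfolding L_eq by (simp_all add: spectral_ln_eigenvector[OF cd] spectral_eigenvectors[OF ab])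
  then have "L ** (outer a a + outer b b) = ln \<sigma>1 *\<^sub>R outer a a + ln \<sigma>2 *\<^sub>R outer b b"
    by (simp add: matrix_add_ldistrib matrix_mult_outer vec_eq_iff)
  then show "L = ln \<sigma>1 *\<^sub>R outer a a + ln \<sigma>2 *\<^sub>R outer b b"
    by (simp add: orthonormal2_outer_sum[OF ab])
qed

section \<open>Gram sums, Rayleigh quotients and alignment\<close>

lemma matrix_vector_mult_sum: "(\<Sum>p\<in>P. A p) *v x = (\<Sum>p\<in>P. A p *v (x::'a::semiring_1^'n))"
  by (induction P rule: infinite_finite_induct) (simp_all add: matrix_vector_mult_add_rdistrib)

lemma transpose_sum: "transpose (\<Sum>p\<in>P. A p) = (\<Sum>p\<in>P. transpose (A p))"
proof (induction P rule: infinite_finite_induct)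
  case (insert p P)
  then show ?case
    by (simp add: vec_eq_iff transpose_def)
qed (simp_all add: vec_eq_iff transpose_def)

definition gram_sum :: "'a set \<Rightarrow> ('a \<Rightarrow> real) \<Rightarrow> ('a \<Rightarrow> real^2) \<Rightarrow> mat2" where
  "gram_sum P c w = (\<Sum>p\<in>P. c p *\<^sub>R outer (w p) (w p))"

lemma transpose_gram_sum: "transpose (gram_sum P c w) = gram_sum P c w"
  by (simp add: gram_sum_def transpose_sum transpose_scalar transpose_outer)

lemma inner_gram_sum: "y \<bullet> (gram_sum P c w *v x) = (\<Sum>p\<in>P. c p * (w p \<bullet> x) * (y \<bullet> w p))"
  by (simp add: gram_sum_def matrix_vector_mult_sum outer_mult_vec inner_sum_right
      flip: scaleR_matrix_vector_assoc)

lemma quadratic_gram_sum: "x \<bullet> (gram_sum P c w *v x) = (\<Sum>p\<in>P. c p * (w p \<bullet> x)\<^sup>2)"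
  by (simp add: inner_gram_sum power2_eq_square inner_commute mult.assoc)

lemma rayleigh_spectral:
  assumes ab: "orthonormal2 a b" and "\<beta> \<le> \<alpha>" and "norm x = 1"
  shows "\<beta> \<le> x \<bullet> ((\<alpha> *\<^sub>R outer a a + \<beta> *\<^sub>R outer b b) *v x)"
    and "x \<bullet> ((\<alpha> *\<^sub>R outer a a + \<beta> *\<^sub>R outer b b) *v x) \<le> \<alpha>"
proof -
  have q: "x \<bullet> ((\<alpha> *\<^sub>R outer a a + \<beta> *\<^sub>R outer b b) *v x) = \<alpha> * (a \<bullet> x)\<^sup>2 + \<beta> * (b \<bullet> x)\<^sup>2"
    by (simp add: spectral_mult_vec inner_add_right inner_commute power2_eq_square)
  have "(a \<bullet> x)\<^sup>2 + (b \<bullet> x)\<^sup>2 = 1"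
    using orthonormal2_sum_sq[OF ab, of x] \<open>norm x = 1\<close> by (simp add: norm_eq_1)
  then have "\<alpha> * (a \<bullet> x)\<^sup>2 + \<alpha> * (b \<bullet> x)\<^sup>2 = \<alpha>" "\<beta> * (a \<bullet> x)\<^sup>2 + \<beta> * (b \<bullet> x)\<^sup>2 = \<beta>"
    by (metis distrib_left mult.right_neutral)+
  moreover have "\<beta> * (a \<bullet> x)\<^sup>2 \<le> \<alpha> * (a \<bullet> x)\<^sup>2" "\<beta> * (b \<bullet> x)\<^sup>2 \<le> \<alpha> * (b \<bullet> x)\<^sup>2"
    using \<open>\<beta> \<le> \<alpha>\<close> by (simp_all add: mult_right_mono)
  ultimately show "\<beta> \<le> x \<bullet> ((\<alpha> *\<^sub>R outer a a + \<beta> *\<^sub>R outer b b) *v x)"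
    and "x \<bullet> ((\<alpha> *\<^sub>R outer a a + \<beta> *\<^sub>R outer b b) *v x) \<le> \<alpha>"
    unfolding q by linarith+
qed

lemma aligned_iff_inner_eq_0:
  assumes uv: "orthonormal2 u v" and "norm w = 1"
  shows "aligned w u \<longleftrightarrow> v \<bullet> w = 0"
proof
  show "aligned w u \<Longrightarrow> v \<bullet> w = 0"
    using orthonormal2_inner[OF uv] by (auto simp: aligned_def)
next
  assume "v \<bullet> w = 0"
  then have "w = (u \<bullet> w) *\<^sub>R u" "(u \<bullet> w)\<^sup>2 = 1"
    using orthonormal2_expand[OF uv, of w] orthonormal2_sum_sq[OF uv, of w] \<open>norm w = 1\<close>
    by (simp_all add: norm_eq_1)
  then show "aligned w u"
    unfolding aligned_def power2_eq_1_iff by (metis scaleR_minus1_left scaleR_one)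
qed

lemma aligned_trans: "aligned x y \<Longrightarrow> aligned y z \<Longrightarrow> aligned x z"
  by (auto simp: aligned_def)

lemma spectral_eigenvector_transversal:
  assumes ab: "orthonormal2 a b" and "\<beta> \<le> \<alpha>" "\<alpha> \<le> \<theta>" and "norm u = 1" "norm x = 1"
    and eig: "(\<alpha> *\<^sub>R outer a a + \<beta> *\<^sub>R outer b b) *v x = \<theta> *\<^sub>R x"
    and "\<not> aligned x u"
  shows "(\<alpha> = \<theta> \<and> \<not> aligned a u) \<or> (\<beta> = \<theta> \<and> \<not> aligned b u)"
proof -
  have \<alpha>: "\<alpha> * (a \<bullet> x) = \<theta> * (a \<bullet> x)" and \<beta>: "\<beta> * (b \<bullet> x) = \<theta> * (b \<bullet> x)"
    using arg_cong[OF eig, of "inner a"] arg_cong[OF eig, of "inner b"] orthonormal2_inner[OF ab]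
    by (simp_all add: spectral_mult_vec inner_add_right)
  show ?thesis
  proof (cases "b \<bullet> x = 0")
    case True
    then have "aligned x a"
      using aligned_iff_inner_eq_0[OF ab \<open>norm x = 1\<close>] by simp
    moreover from this have "a \<bullet> x \<noteq> 0"
      using orthonormal2_inner[OF ab] by (auto simp: aligned_def)
    ultimately show ?thesis
      using \<alpha> aligned_trans[of x a u] \<open>\<not> aligned x u\<close> by auto
  next
    case False
    then have "\<beta> = \<theta>"
      using \<beta> by simp
    moreover have "\<not> aligned a u" if "aligned b u"
      using that orthonormal2_inner[OF ab] \<open>norm u = 1\<close> by (auto simp: aligned_def norm_eq_1)
    ultimately show ?thesis
      using assms(2,3) by auto
  qed
qed

lemma inner_sq_lower_bound:
  assumes uv: "orthonormal2 u v" and "norm w = 1" "norm x = 1"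
  shows "(v \<bullet> w)\<^sup>2 \<le> 3 * ((u \<bullet> x)\<^sup>2 + (w \<bullet> x)\<^sup>2)"
proof -
  define \<alpha> \<beta> c z where "\<alpha> = u \<bullet> w" "\<beta> = v \<bullet> w" "c = u \<bullet> x" "z = v \<bullet> x"
  have "\<alpha>\<^sup>2 + \<beta>\<^sup>2 = 1" "c\<^sup>2 + z\<^sup>2 = 1"
    using orthonormal2_sum_sq[OF uv] assms(2,3) by (simp_all add: \<alpha>_\<beta>_c_z_def norm_eq_1)
  have "w \<bullet> x = (\<alpha> *\<^sub>R u + \<beta> *\<^sub>R v) \<bullet> x"
    using orthonormal2_expand[OF uv, of w] by (simp add: \<alpha>_\<beta>_c_z_def)
  then have "(w \<bullet> x - c * \<alpha>)\<^sup>2 = \<beta>\<^sup>2 * z\<^sup>2"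
    by (simp add: \<alpha>_\<beta>_c_z_def inner_add_left power_mult_distrib)
  moreover have "\<beta>\<^sup>2 = \<beta>\<^sup>2 * c\<^sup>2 + \<beta>\<^sup>2 * z\<^sup>2"
    using \<open>c\<^sup>2 + z\<^sup>2 = 1\<close> by (metis distrib_left mult.right_neutral)
  ultimately have "\<beta>\<^sup>2 = \<beta>\<^sup>2 * c\<^sup>2 + (w \<bullet> x - c * \<alpha>)\<^sup>2"
    by simp
  moreover have "\<beta>\<^sup>2 \<le> 1" "\<alpha>\<^sup>2 \<le> 1"
    using \<open>\<alpha>\<^sup>2 + \<beta>\<^sup>2 = 1\<close> by (metis le_add_same_cancel1 zero_le_power2 add.commute)+
  then have "\<beta>\<^sup>2 * c\<^sup>2 \<le> c\<^sup>2" "c\<^sup>2 * \<alpha>\<^sup>2 \<le> c\<^sup>2"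
    by (simp_all add: mult_left_le mult_left_le_one_le)
  moreover have "(w \<bullet> x - c * \<alpha>)\<^sup>2 \<le> 2 * (w \<bullet> x)\<^sup>2 + 2 * (c\<^sup>2 * \<alpha>\<^sup>2)"
    using zero_le_power2[of "w \<bullet> x + c * \<alpha>"] by (simp add: power2_eq_square algebra_simps)
  ultimately show ?thesis
    using zero_le_power2[of "w \<bullet> x"] unfolding \<alpha>_\<beta>_c_z_def(2,3)[symmetric] by argo
qed

lemma tendsto_null_bounded:
  fixes X :: "'a \<Rightarrow> 'b::real_normed_vector"
  assumes "(c \<longlongrightarrow> 0) F" "\<And>x. norm (X x) \<le> B"
  shows "((\<lambda>x. c x *\<^sub>R X x) \<longlongrightarrow> 0) F"
proof (rule Lim_null_comparison)
  show "eventually (\<lambda>x. norm (c x *\<^sub>R X x) \<le> \<bar>c x\<bar> * B) F"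
    using assms(2) by (intro always_eventually) (simp add: mult_left_mono)
  show "((\<lambda>x. \<bar>c x\<bar> * B) \<longlongrightarrow> 0) F"
    using tendsto_mult_left_zero[OF tendsto_rabs_zero[OF assms(1)]] .
qed

lemma tendsto_ln_div_of_exp_bounds:
  fixes \<sigma> :: "real \<Rightarrow> real"
  assumes "K1 > 0" "K2 > 0"
    and bounds: "eventually (\<lambda>m. K1 * exp (m * c) \<le> \<sigma> m \<and> \<sigma> m \<le> K2 * exp (m * c)) at_top"
  shows "((\<lambda>m. ln (\<sigma> m) / m) \<longlongrightarrow> c) at_top"
proof (rule tendsto_sandwich[where f = "\<lambda>m. c + ln K1 / m" and h = "\<lambda>m. c + ln K2 / m"])
  have "eventually (\<lambda>m. ln K1 + m * c \<le> ln (\<sigma> m) \<and> ln (\<sigma> m) \<le> ln K2 + m * c) at_top"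
    using bounds
  proof eventually_elim
    case (elim m)
    then have "0 < \<sigma> m"
      using \<open>K1 > 0\<close> by (meson exp_gt_zero mult_pos_pos order_less_le_trans)
    with elim have "ln (K1 * exp (m * c)) \<le> ln (\<sigma> m) \<and> ln (\<sigma> m) \<le> ln (K2 * exp (m * c))"
      using assms(1,2) by simp
    then show ?case
      using assms(1,2) by (simp add: ln_mult)
  qed
  with eventually_gt_at_top[of 0]
  have "eventually (\<lambda>m. c + ln K1 / m \<le> ln (\<sigma> m) / m \<and> ln (\<sigma> m) / m \<le> c + ln K2 / m) at_top"
  proof eventually_elim
    case (elim m)
    then have "(ln K1 + m * c) / m \<le> ln (\<sigma> m) / m" "ln (\<sigma> m) / m \<le> (ln K2 + m * c) / m"
      by (simp_all add: divide_right_mono)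
    moreover have "(ln K1 + m * c) / m = c + ln K1 / m" "(ln K2 + m * c) / m = c + ln K2 / m"
      using elim by (simp_all add: field_simps)
    ultimately show ?case
      by simp
  qed
  then show "eventually (\<lambda>m. c + ln K1 / m \<le> ln (\<sigma> m) / m) at_top"
    and "eventually (\<lambda>m. ln (\<sigma> m) / m \<le> c + ln K2 / m) at_top"
    by (auto elim: eventually_mono)
qed real_asymp+

lemma outer_self_expand:
  assumes uv: "orthonormal2 u v" and "norm x = 1"
  shows "outer x x = outer u u + ((v \<bullet> x)\<^sup>2 *\<^sub>R (outer v v - outer u u)
           + ((u \<bullet> x) * (v \<bullet> x)) *\<^sub>R (outer u v + outer v u))"
proof -
  define c s where "c = u \<bullet> x" and "s = v \<bullet> x"
  have "outer x x = outer (c *\<^sub>R u + s *\<^sub>R v) (c *\<^sub>R u + s *\<^sub>R v)"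
    using orthonormal2_expand[OF uv, of x] by (simp add: c_def s_def)
  also have "\<dots> = c\<^sup>2 *\<^sub>R outer u u + (c * s) *\<^sub>R (outer u v + outer v u) + s\<^sup>2 *\<^sub>R outer v v"
    by (simp add: vec_eq_iff power2_eq_square algebra_simps)
  also have "c\<^sup>2 = 1 - s\<^sup>2"
    using orthonormal2_sum_sq[OF uv, of x] \<open>norm x = 1\<close> by (simp add: c_def s_def norm_eq_1)
  finally show ?thesis
    by (simp add: c_def s_def algebra_simps)
qed

lemma tendsto_outer_self:
  assumes uv: "orthonormal2 u v" and unit: "\<And>m. norm (x m) = 1"
    and lim: "((\<lambda>m. v \<bullet> x m) \<longlongrightarrow> 0) F"
  shows "((\<lambda>m. outer (x m) (x m)) \<longlongrightarrow> outer u u) F"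
proof -
  have "((\<lambda>m. (u \<bullet> x m) * (v \<bullet> x m)) \<longlongrightarrow> 0) F"
  proof (rule Lim_null_comparison)
    have "\<bar>u \<bullet> x m\<bar> \<le> 1" for m
      using Cauchy_Schwarz_ineq2[of u "x m"] uv unit by (simp add: orthonormal2_def)
    then show "eventually (\<lambda>m. norm ((u \<bullet> x m) * (v \<bullet> x m)) \<le> \<bar>v \<bullet> x m\<bar>) F"
      by (intro always_eventually) (simp add: abs_mult mult_left_le_one_le)
    show "((\<lambda>m. \<bar>v \<bullet> x m\<bar>) \<longlongrightarrow> 0) F"
      using tendsto_rabs_zero[OF lim] .
  qed
  moreover have "((\<lambda>m. (v \<bullet> x m)\<^sup>2) \<longlongrightarrow> 0) F"
    using tendsto_power[OF lim, of 2] by simp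
  ultimately have "((\<lambda>m. outer u u + ((v \<bullet> x m)\<^sup>2 *\<^sub>R (outer v v - outer u u)
      + ((u \<bullet> x m) * (v \<bullet> x m)) *\<^sub>R (outer u v + outer v u)))
      \<longlongrightarrow> outer u u + (0 *\<^sub>R (outer v v - outer u u) + 0 *\<^sub>R (outer u v + outer v u))) F"
    by (intro tendsto_add tendsto_scaleR tendsto_const)
  then show ?thesis
    by (simp add: outer_self_expand[OF uv unit])
qed

section \<open>Asymptotics of Gram sums with a dominant direction\<close>

locale dominant_family =
  fixes P :: "'a set" and e :: "'a \<Rightarrow> real" and w :: "'a \<Rightarrow> real^2"
    and p0 :: 'a and u v :: "real^2"
  assumes finite_P: "finite P"
    and unit_w: "\<And>p. p \<in> P \<Longrightarrow> norm (w p) = 1"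
    and p0_in_P: "p0 \<in> P" and w_p0: "w p0 = u"
    and e_le_top: "\<And>p. p \<in> P \<Longrightarrow> e p \<le> e p0"
    and uv: "orthonormal2 u v"
    and transversal: "\<exists>p\<in>P. \<not> aligned (w p) u"
begin

definition second :: real where
  "second = Max (e ` {p \<in> P. \<not> aligned (w p) u})"

lemma second_attained:
  obtains q where "q \<in> P" "\<not> aligned (w q) u" "e q = second"
proof -
  have "second \<in> e ` {p \<in> P. \<not> aligned (w p) u}"
    unfolding second_def using finite_P transversal by (intro Max_in) auto
  then show thesis
    by (auto intro: that)
qed

lemma e_le_second: "p \<in> P \<Longrightarrow> \<not> aligned (w p) u \<Longrightarrow> e p \<le> second"
  unfolding second_def using finite_P by (intro Max_ge) auto

lemma second_le_top: "second \<le> e p0"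
  by (metis second_attained e_le_top)

lemma card_P_pos: "0 < real (card P)"
  using finite_P p0_in_P card_gt_0_iff by auto

abbreviation G :: "real \<Rightarrow> mat2" where
  "G m \<equiv> gram_sum P (\<lambda>p. exp (m * e p)) w"

text \<open>Only directions transversal to \<open>u\<close> see \<open>v\<close>, and those carry weight at most \<open>second\<close>.\<close>
lemma transversal_part_bound:
  assumes "0 \<le> m" "norm x = 1"
  shows "\<bar>v \<bullet> (G m *v x)\<bar> \<le> card P * exp (m * second)"
proof -
  have "\<bar>exp (m * e p) * (w p \<bullet> x) * (v \<bullet> w p)\<bar> \<le> exp (m * second)" if p: "p \<in> P" for p
  proof (cases "aligned (w p) u")
    case True
    then show ?thesis
      using aligned_iff_inner_eq_0[OF uv unit_w[OF p]] by simp
  next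
    case False
    have "\<bar>w p \<bullet> x\<bar> \<le> 1" "\<bar>v \<bullet> w p\<bar> \<le> 1"
      using Cauchy_Schwarz_ineq2[of "w p" x] Cauchy_Schwarz_ineq2[of v "w p"] uv unit_w[OF p] assms(2)
      by (simp_all add: orthonormal2_def)
    then have "\<bar>w p \<bullet> x\<bar> * \<bar>v \<bullet> w p\<bar> \<le> 1"
      by (simp add: mult_le_one)
    then have "\<bar>exp (m * e p) * (w p \<bullet> x) * (v \<bullet> w p)\<bar> \<le> exp (m * e p)"
      by (simp add: abs_mult mult.assoc mult_left_le)
    also have "\<dots> \<le> exp (m * second)"
      using e_le_second[OF p False] assms(1) by (simp add: mult_left_mono)
    finally show ?thesis .
  qed
  then have "(\<Sum>p\<in>P. \<bar>exp (m * e p) * (w p \<bullet> x) * (v \<bullet> w p)\<bar>) \<le> card P * exp (m * second)"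
    using sum_mono[of P _ "\<lambda>_. exp (m * second)"] by simp
  then show ?thesis
    unfolding inner_gram_sum by (rule order_trans[OF sum_abs])
qed

context
  fixes m \<sigma>1 \<sigma>2 :: real and a b :: "real^2"
  assumes m: "0 \<le> m" and ab: "orthonormal2 a b" and \<sigma>: "\<sigma>2 \<le> \<sigma>1"
    and G_eq: "G m = \<sigma>1 *\<^sub>R outer a a + \<sigma>2 *\<^sub>R outer b b"
begin

lemma gram_eigenvalues: "\<sigma>1 = a \<bullet> (G m *v a)" "\<sigma>2 = b \<bullet> (G m *v b)"
  using orthonormal2_inner[OF ab] by (simp_all add: G_eq spectral_eigenvectors[OF ab])

lemma top_eigenvalue_ge: "exp (m * e p0) \<le> \<sigma>1"
proof -
  have "exp (m * e p0) = exp (m * e p0) * (w p0 \<bullet> u)\<^sup>2"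
    using uv w_p0 by (simp add: orthonormal2_def norm_eq_1)
  also have "\<dots> \<le> (\<Sum>p\<in>P. exp (m * e p) * (w p \<bullet> u)\<^sup>2)"
    by (rule member_le_sum[OF p0_in_P]) (simp_all add: finite_P)
  also have "\<dots> = u \<bullet> (G m *v u)"
    by (simp add: quadratic_gram_sum)
  also have "\<dots> \<le> \<sigma>1"
    using rayleigh_spectral(2)[OF ab \<sigma>] uv by (simp add: G_eq orthonormal2_def)
  finally show ?thesis .
qed

lemma top_eigenvalue_le: "\<sigma>1 \<le> card P * exp (m * e p0)"
proof -
  have "exp (m * e p) * (w p \<bullet> a)\<^sup>2 \<le> exp (m * e p0)" if p: "p \<in> P" for p
  proof -
    have "(w p \<bullet> a)\<^sup>2 \<le> 1"
      using Cauchy_Schwarz_ineq2[of "w p" a] ab unit_w[OF p]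
      by (simp add: orthonormal2_def abs_square_le_1)
    moreover have "exp (m * e p) \<le> exp (m * e p0)"
      using e_le_top[OF p] m by (simp add: mult_left_mono)
    ultimately show ?thesis
      by (meson exp_ge_zero mult_left_le order_trans)
  qed
  then have "(\<Sum>p\<in>P. exp (m * e p) * (w p \<bullet> a)\<^sup>2) \<le> card P * exp (m * e p0)"
    using sum_mono[of P _ "\<lambda>_. exp (m * e p0)"] by simp
  then show ?thesis
    by (simp add: gram_eigenvalues(1) quadratic_gram_sum)
qed

lemma second_eigenvalue_ge:
  assumes q: "q \<in> P" "\<not> aligned (w q) u"
  shows "(v \<bullet> w q)\<^sup>2 / 3 * exp (m * e q) \<le> \<sigma>2"
proof -
  have "q \<noteq> p0"
    using q(2) w_p0 by (auto simp: aligned_def)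
  have "norm b = 1"
    using ab by (simp add: orthonormal2_def)
  then have "(v \<bullet> w q)\<^sup>2 / 3 \<le> (u \<bullet> b)\<^sup>2 + (w q \<bullet> b)\<^sup>2"
    using inner_sq_lower_bound[OF uv unit_w[OF q(1)]] by fastforce
  then have "(v \<bullet> w q)\<^sup>2 / 3 * exp (m * e q) \<le> ((u \<bullet> b)\<^sup>2 + (w q \<bullet> b)\<^sup>2) * exp (m * e q)"
    by (rule mult_right_mono) simp
  also have "\<dots> \<le> exp (m * e p0) * (w p0 \<bullet> b)\<^sup>2 + exp (m * e q) * (w q \<bullet> b)\<^sup>2"
    using e_le_top[OF q(1)] m w_p0
    by (simp add: algebra_simps mult_left_mono mult_right_mono inner_commute)
  also have "\<dots> = (\<Sum>p\<in>{p0, q}. exp (m * e p) * (w p \<bullet> b)\<^sup>2)"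
    using \<open>q \<noteq> p0\<close> by simp
  also have "\<dots> \<le> (\<Sum>p\<in>P. exp (m * e p) * (w p \<bullet> b)\<^sup>2)"
    by (rule sum_mono2) (use finite_P p0_in_P q(1) in auto)
  also have "\<dots> = \<sigma>2"
    by (simp add: gram_eigenvalues(2) quadratic_gram_sum)
  finally show ?thesis .
qed

lemma second_eigenvalue_le: "\<sigma>2 \<le> card P * exp (m * second)"
proof -
  have "\<sigma>2 \<le> v \<bullet> (G m *v v)"
    using rayleigh_spectral(1)[OF ab \<sigma>] uv by (simp add: G_eq orthonormal2_def)
  moreover have "\<bar>v \<bullet> (G m *v v)\<bar> \<le> card P * exp (m * second)"
    using transversal_part_bound[OF m] uv by (simp add: orthonormal2_def)
  ultimately show ?thesis
    by linarith
qed

lemma top_eigenvector_tilt: "\<bar>\<sigma>1 * (v \<bullet> a)\<bar> \<le> card P * exp (m * second)"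
proof -
  have "\<sigma>1 * (v \<bullet> a) = v \<bullet> (G m *v a)"
    by (simp add: G_eq spectral_eigenvectors[OF ab])
  then show ?thesis
    using transversal_part_bound[OF m] ab by (simp add: orthonormal2_def)
qed

end

context
  fixes A B :: "real \<Rightarrow> real^2" and s1 s2 :: "real \<Rightarrow> real"
  assumes ortho: "\<And>m. orthonormal2 (A m) (B m)" and ordered: "\<And>m. s2 m \<le> s1 m"
    and decomposition: "\<And>m. G m = s1 m *\<^sub>R outer (A m) (A m) + s2 m *\<^sub>R outer (B m) (B m)"
begin

lemma second_eigenvalue_pos:
  assumes "0 \<le> m"
  shows "0 < s2 m"
proof -
  obtain q where q: "q \<in> P" "\<not> aligned (w q) u" "e q = second"
    by (rule second_attained)
  then have "0 < (v \<bullet> w q)\<^sup>2 / 3 * exp (m * e q)"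
    using aligned_iff_inner_eq_0[OF uv unit_w[OF q(1)]] by simp
  also have "\<dots> \<le> s2 m"
    using second_eigenvalue_ge[OF assms ortho ordered decomposition q(1,2)] .
  finally show ?thesis .
qed

lemma tendsto_ln_top_eigenvalue: "((\<lambda>m. ln (s1 m) / m) \<longlongrightarrow> e p0) at_top"
proof (rule tendsto_ln_div_of_exp_bounds[OF zero_less_one card_P_pos])
  show "eventually (\<lambda>m. 1 * exp (m * e p0) \<le> s1 m \<and> s1 m \<le> card P * exp (m * e p0)) at_top"
    using eventually_ge_at_top[of 0]
    by eventually_elim
      (simp add: top_eigenvalue_ge[OF _ ortho ordered decomposition]
        top_eigenvalue_le[OF _ ortho ordered decomposition])
qed

lemma tendsto_ln_second_eigenvalue: "((\<lambda>m. ln (s2 m) / m) \<longlongrightarrow> second) at_top"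
proof -
  obtain q where q: "q \<in> P" "\<not> aligned (w q) u" "e q = second"
    by (rule second_attained)
  then have "0 < (v \<bullet> w q)\<^sup>2 / 3"
    using aligned_iff_inner_eq_0[OF uv unit_w[OF q(1)]] by simp
  then show ?thesis
  proof (rule tendsto_ln_div_of_exp_bounds[OF _ card_P_pos])
    show "eventually (\<lambda>m. (v \<bullet> w q)\<^sup>2 / 3 * exp (m * second) \<le> s2 m
        \<and> s2 m \<le> card P * exp (m * second)) at_top"
      using eventually_ge_at_top[of 0]
    proof eventually_elim
      case (elim m)
      show ?case
        using second_eigenvalue_ge[OF elim ortho ordered decomposition q(1,2)] q(3)
          second_eigenvalue_le[OF elim ortho ordered decomposition] by simp
    qed
  qed
qed

text \<open>The tilt \<open>v \<bullet> A m\<close> decays like \<open>exp (m * (second - e p0))\<close>.\<close>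
lemma tendsto_top_projection:
  assumes gap: "second < e p0"
  shows "((\<lambda>m. outer (A m) (A m)) \<longlongrightarrow> outer u u) at_top"
proof (rule tendsto_outer_self[OF uv])
  show "norm (A m) = 1" for m
    using ortho[of m] by (simp add: orthonormal2_def)
  define d where "d = second - e p0"
  have "d < 0"
    using gap by (simp add: d_def)
  show "((\<lambda>m. v \<bullet> A m) \<longlongrightarrow> 0) at_top"
  proof (rule Lim_null_comparison)
    show "eventually (\<lambda>m. norm (v \<bullet> A m) \<le> card P * exp (m * d)) at_top"
      using eventually_ge_at_top[of 0]
    proof eventually_elim
      case (elim m)
      have "exp (m * e p0) * \<bar>v \<bullet> A m\<bar> \<le> \<bar>s1 m * (v \<bullet> A m)\<bar>"
        using top_eigenvalue_ge[OF elim ortho ordered decomposition]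
        by (simp add: abs_mult mult_right_mono)
      also have "\<dots> \<le> card P * exp (m * second)"
        using top_eigenvector_tilt[OF elim ortho ordered decomposition] .
      also have "\<dots> = exp (m * e p0) * (card P * exp (m * d))"
        by (simp add: d_def algebra_simps flip: exp_add)
      finally show ?case
        by simp
    qed
    show "((\<lambda>m. card P * exp (m * d)) \<longlongrightarrow> 0) at_top"
      using \<open>d < 0\<close> by real_asymp
  qed
qed

lemma scaled_log_gram_eq:
  assumes "0 < m"
  shows "(1 / m) *\<^sub>R mlog (G m)
    = (ln (s2 m) / m) *\<^sub>R mat 1 + (ln (s1 m) / m - ln (s2 m) / m) *\<^sub>R outer (A m) (A m)"
proof -
  have "0 < s2 m" "0 < s1 m"
    using second_eigenvalue_pos[of m] ordered[of m] assms by simp_all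
  then have "mlog (G m) = ln (s1 m) *\<^sub>R outer (A m) (A m) + ln (s2 m) *\<^sub>R outer (B m) (B m)"
    by (simp add: decomposition mlog_spectral[OF ortho])
  then show ?thesis
    by (simp add: orthonormal2_outer_sum[OF ortho[of m], symmetric] algebra_simps diff_divide_distrib)
qed

text \<open>If \<open>second = e p0\<close> the scalar factor vanishes in the limit; otherwise the projection converges.\<close>
lemma tendsto_scaled_top_projection_error:
  "((\<lambda>m. (ln (s1 m) / m - ln (s2 m) / m) *\<^sub>R (outer (A m) (A m) - outer u u)) \<longlongrightarrow> 0) at_top"
proof -
  have d: "((\<lambda>m. ln (s1 m) / m - ln (s2 m) / m) \<longlongrightarrow> e p0 - second) at_top"
    by (intro tendsto_diff tendsto_ln_top_eigenvalue tendsto_ln_second_eigenvalue)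
  show ?thesis
  proof (cases "second < e p0")
    case True
    from tendsto_scaleR[OF d LIM_zero[OF tendsto_top_projection[OF True]]] show ?thesis
      by simp
  next
    case False
    with d second_le_top have "((\<lambda>m. ln (s1 m) / m - ln (s2 m) / m) \<longlongrightarrow> 0) at_top"
      by simp
    moreover have "norm (outer (A m) (A m) - outer u u) \<le> 2" for m
      using norm_triangle_ineq4[of "outer (A m) (A m)" "outer u u"] ortho[of m] uv
      by (simp add: norm_outer orthonormal2_def)
    ultimately show ?thesis
      by (intro tendsto_null_bounded[where B = 2]) auto
  qed
qed

lemma tendsto_scaled_log_gram_of_spectral:
  "((\<lambda>m. (1 / m) *\<^sub>R mlog (G m)) \<longlongrightarrow> e p0 *\<^sub>R outer u u + second *\<^sub>R outer v v) at_top"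
proof -
  define d where "d m = ln (s1 m) / m - ln (s2 m) / m" for m
  have "((\<lambda>m. (ln (s2 m) / m) *\<^sub>R mat 1 + d m *\<^sub>R outer u u + d m *\<^sub>R (outer (A m) (A m) - outer u u))
      \<longlongrightarrow> second *\<^sub>R mat 1 + (e p0 - second) *\<^sub>R outer u u + 0) at_top"
    unfolding d_def
    by (intro tendsto_add tendsto_scaleR tendsto_diff tendsto_const tendsto_ln_top_eigenvalue
        tendsto_ln_second_eigenvalue tendsto_scaled_top_projection_error)
  moreover have "second *\<^sub>R mat 1 + (e p0 - second) *\<^sub>R outer u u + 0 = e p0 *\<^sub>R outer u u + second *\<^sub>R outer v v"
    by (simp add: orthonormal2_outer_sum[OF uv, symmetric] algebra_simps)
  moreover have "eventually (\<lambda>m. (ln (s2 m) / m) *\<^sub>R mat 1 + d m *\<^sub>R outer u u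
      + d m *\<^sub>R (outer (A m) (A m) - outer u u) = (1 / m) *\<^sub>R mlog (G m)) at_top"
    using eventually_gt_at_top[of 0]
    by eventually_elim (simp add: scaled_log_gram_eq d_def scaleR_diff_right)
  ultimately show ?thesis
    by (simp add: tendsto_cong)
qed

end

theorem tendsto_scaled_log_gram:
  "((\<lambda>m. (1 / m) *\<^sub>R mlog (G m)) \<longlongrightarrow> e p0 *\<^sub>R outer u u + second *\<^sub>R outer v v) at_top"
proof -
  have "\<forall>m. \<exists>a b \<alpha> \<beta>. orthonormal2 a b \<and> \<beta> \<le> \<alpha> \<and> G m = \<alpha> *\<^sub>R outer a a + \<beta> *\<^sub>R outer b b"
    by (metis symmetric2_spectral transpose_gram_sum)
  then obtain A B s1 s2 where "\<And>m. orthonormal2 (A m) (B m)" "\<And>m. s2 m \<le> s1 m"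
    "\<And>m. G m = s1 m *\<^sub>R outer (A m) (A m) + s2 m *\<^sub>R outer (B m) (B m)"
    by metis
  then show ?thesis
    by (rule tendsto_scaled_log_gram_of_spectral)
qed

end


section \<open>The log-exp-supremum of symmetric 2x2 matrices\<close>

lemma sum_mexp_eq_gram_sum:
  assumes "\<And>i. i \<in> {1..n} \<Longrightarrow> orthonormal2 (u i) (v i)
      \<and> X i = lam i *\<^sub>R outer (u i) (u i) + mu i *\<^sub>R outer (v i) (v i)"
  shows "(\<Sum>i\<in>{1..n}. mexp (m *\<^sub>R X i)) = gram_sum (occ n) (\<lambda>p. exp (m * eigval lam mu p)) (eigvec u v)"
proof -
  have "mexp (m *\<^sub>R X i) = (\<Sum>j\<in>{0, 1}. exp (m * eigval lam mu (i, j)) *\<^sub>R outer (eigvec u v (i, j)) (eigvec u v (i, j)))"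
    if "i \<in> {1..n}" for i
    using assms[OF that] mexp_spectral[of "u i" "v i" "m * lam i" "m * mu i"]
    by (simp add: eigval_def eigvec_def scaleR_add_right)
  then have "(\<Sum>i\<in>{1..n}. mexp (m *\<^sub>R X i))
      = (\<Sum>i\<in>{1..n}. \<Sum>j\<in>{0, 1}. exp (m * eigval lam mu (i, j)) *\<^sub>R outer (eigvec u v (i, j)) (eigvec u v (i, j)))"
    by (rule sum.cong[OF refl])
  also have "\<dots> = gram_sum (occ n) (\<lambda>p. exp (m * eigval lam mu p)) (eigvec u v)"
    unfolding gram_sum_def occ_def by (rule sum.cartesian_product'[symmetric])
  finally show ?thesis .
qed

locale eigen_occurrences =
  fixes n :: nat and X :: "nat \<Rightarrow> real^2^2"
    and lam mu :: "nat \<Rightarrow> real" and u v :: "nat \<Rightarrow> real^2"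
  assumes n_ge_1: "n \<ge> 1"
    and spectral: "\<And>i. i \<in> {1..n} \<Longrightarrow>
        X i = lam i *\<^sub>R outer (u i) (u i) + mu i *\<^sub>R outer (v i) (v i)
        \<and> lam i \<ge> mu i \<and> norm (u i) = 1 \<and> norm (v i) = 1 \<and> u i \<bullet> v i = 0"
    and largest: "\<And>i. i \<in> {1..n} \<Longrightarrow> lam i \<le> lam 1"
begin

lemma orthonormal_uv: "i \<in> {1..n} \<Longrightarrow> orthonormal2 (u i) (v i)"
  using spectral by (simp add: orthonormal2_def)

lemma one_in_range: "1 \<in> {1..n}"
  using n_ge_1 by simp

lemma mem_occ: "p \<in> occ n \<longleftrightarrow> fst p \<in> {1..n} \<and> snd p \<in> {0, 1}"
  by (cases p) (simp add: occ_def)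

sublocale dominant_family "occ n" "eigval lam mu" "eigvec u v" "(1, 0)" "u 1" "v 1"
proof
  show "finite (occ n)" "(1, 0) \<in> occ n" "eigvec u v (1, 0) = u 1" "orthonormal2 (u 1) (v 1)"
    using one_in_range orthonormal_uv[OF one_in_range] by (simp_all add: occ_def eigvec_def)
  show "norm (eigvec u v p) = 1" if "p \<in> occ n" for p
    using that spectral[of "fst p"] by (auto simp: mem_occ eigvec_def)
  show "eigval lam mu p \<le> eigval lam mu (1, 0)" if "p \<in> occ n" for p
    using that spectral[of "fst p"] largest[of "fst p"] by (auto simp: mem_occ eigval_def)
  have "\<not> aligned (v 1) (u 1)"
    using aligned_iff_inner_eq_0[OF orthonormal_uv[OF one_in_range]] spectral[OF one_in_range]
    by (simp add: norm_eq_1)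
  then show "\<exists>p\<in>occ n. \<not> aligned (eigvec u v p) (u 1)"
    using one_in_range by (intro bexI[of _ "(1, 1)"]) (simp_all add: mem_occ eigvec_def)
qed

lemma has_sup_LE_second:
  "has_sup_LE n X (lam 1 *\<^sub>R outer (u 1) (u 1) + second *\<^sub>R outer (v 1) (v 1))"
proof -
  have "orthonormal2 (u i) (v i) \<and> X i = lam i *\<^sub>R outer (u i) (u i) + mu i *\<^sub>R outer (v i) (v i)"
    if "i \<in> {1..n}" for i
    using orthonormal_uv[OF that] spectral[OF that] by simp
  then have "(\<Sum>i\<in>{1..n}. mexp (m *\<^sub>R X i)) = G m" for m
    by (rule sum_mexp_eq_gram_sum)
  moreover have "eigval lam mu (1, 0) = lam 1"
    by (simp add: eigval_def)
  ultimately show ?thesis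
    using tendsto_scaled_log_gram unfolding has_sup_LE_def by simp
qed

lemma Max_transversal_eigenvalues:
  "Max {eigval lam mu p | p. p \<in> occ n - {(1, 0)} \<and> \<not> aligned (eigvec u v p) (u 1)} = second"
proof -
  have "p \<noteq> (1, 0)" if "\<not> aligned (eigvec u v p) (u 1)" for p
    using that w_p0 by (auto simp: aligned_def)
  then show ?thesis
    unfolding second_def by (intro arg_cong[where f = Max]) blast
qed

lemma second_eq_top_if_transversal_eigenvector:
  assumes "norm x = 1" "i \<in> {1..n}" "X i *v x = lam 1 *\<^sub>R x" "\<not> aligned x (u 1)"
  shows "second = lam 1"
proof -
  have "(lam i = lam 1 \<and> \<not> aligned (u i) (u 1)) \<or> (mu i = lam 1 \<and> \<not> aligned (v i) (u 1))"
    using spectral_eigenvector_transversal[OF orthonormal_uv[OF assms(2)] _ largest[OF assms(2)]]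
      spectral[OF assms(2)] spectral[OF one_in_range] assms
    by auto
  then have "\<exists>p\<in>occ n. eigval lam mu p = lam 1 \<and> \<not> aligned (eigvec u v p) (u 1)"
  proof
    assume "lam i = lam 1 \<and> \<not> aligned (u i) (u 1)"
    then show ?thesis
      using assms(2) by (intro bexI[of _ "(i, 0)"]) (simp_all add: mem_occ eigval_def eigvec_def)
  next
    assume "mu i = lam 1 \<and> \<not> aligned (v i) (u 1)"
    then show ?thesis
      using assms(2) by (intro bexI[of _ "(i, 1)"]) (simp_all add: mem_occ eigval_def eigvec_def)
  qed
  then have "lam 1 \<le> second"
    using e_le_second by metis
  then show ?thesis
    using second_le_top by (simp add: eigval_def)
qed

end

theorem corollary1:
  fixes n :: nat and X :: "nat \<Rightarrow> real^2^2"
    and lam mu :: "nat \<Rightarrow> real" and u v :: "nat \<Rightarrow> real^2"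
  assumes "n \<ge> 1"
    and spectral: "\<And>i. i \<in> {1..n} \<Longrightarrow>
        X i = lam i *\<^sub>R outer (u i) (u i) + mu i *\<^sub>R outer (v i) (v i)
        \<and> lam i \<ge> mu i \<and> norm (u i) = 1 \<and> norm (v i) = 1 \<and> u i \<bullet> v i = 0"
    and largest: "\<And>i. i \<in> {1..n} \<Longrightarrow> lam i \<le> lam 1"
  shows "has_sup_LE n X
     (if card {p \<in> occ n. eigval lam mu p = lam 1} \<noteq> 1
         \<and> (\<exists>w. norm w = 1 \<and> (\<exists>i\<in>{1..n}. X i *v w = lam 1 *\<^sub>R w) \<and> \<not> aligned w (u 1))
      then lam 1 *\<^sub>R mat 1
      else lam 1 *\<^sub>R outer (u 1) (u 1)
           + (Max {eigval lam mu p | p. p \<in> occ n - {(1, 0)}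
                                          \<and> \<not> aligned (eigvec u v p) (u 1)})
             *\<^sub>R outer (v 1) (v 1))"
proof -
  interpret eigen_occurrences n X lam mu u v
    using assms by unfold_locales
  show ?thesis
  proof (cases "\<exists>w. norm w = 1 \<and> (\<exists>i\<in>{1..n}. X i *v w = lam 1 *\<^sub>R w) \<and> \<not> aligned w (u 1)")
    case True
    then have "second = lam 1"
      using second_eq_top_if_transversal_eigenvector by blast
    moreover have "lam 1 *\<^sub>R outer (u 1) (u 1) + lam 1 *\<^sub>R outer (v 1) (v 1) = lam 1 *\<^sub>R mat 1"
      unfolding scaleR_add_right[symmetric] orthonormal2_outer_sum[OF uv] ..
    ultimately show ?thesis
      using has_sup_LE_second Max_transversal_eigenvalues True by simp
  next
    case False
    then show ?thesis
      using has_sup_LE_second Max_transversal_eigenvalues by (simp only: if_False simp_thms)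
  qed
qed

end
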